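(* Let $N\ge0$ be an integer, let $\phi,\psi\in L^2(\mathbb{Q}_p)$ with $\operatorname{supp}\phi,\operatorname{supp}\psi\subset B_N(0)$, and let $b\in I_p$ with $|b|_p\le p^N$. If $$\psi(\cdot-b)\in\overline{\operatorname{span}\{\phi(p^{-1}x-a):\ a\in I_p\}}$$ (closure in $L^2(\mathbb{Q}_p)$), then there exist complex numbers $h^\psi_{k,b}$, $k=0,\dots,p^{N+1}-1$, such that $$\psi(x-b)=\sum_{k=0}^{p^{N+1}-1}h^\psi_{k,b}\,\phi\Big(\frac{x}{p}-\frac{k}{p^{N+1}}\Big)$$ for all $x\in\mathbb{Q}_p$ (as elements of $L^2(\mathbb{Q}_p)$).
   Context: $p$ is a prime, $\mathbb{Q}_p$ the field of $p$-adic numbers with norm $|\cdot|_p$ and Haar measure $dx$. Every nonzero $x\in\mathbb{Q}_p$ has canonical form $x=p^{\gamma}\sum_{j\ge0}x_jp^j$ with $\gamma\in\mathbb{Z}$, $x_j\in\{0,\dots,p-1\}$, $x_0\ne0$; its fractional part is $\{x\}_p=p^{\gamma}\sum_{j=0}^{-\gamma-1}x_jp^j$, and $\{0\}_p=0$. $I_p=\{a\in\mathbb{Q}_p:\{a\}_p=a\}$. $B_\gamma(a)=\{x\in\mathbb{Q}_p:|x-a|_p\le p^\gamma\}$. *)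

theory Defs
  imports "HOL-Analysis.Analysis"
begin

text \<open>
  We use the isomorphism
  Q_p = inverse limit over n of Q_p / p^n Z_p, and Q_p / p^n Z_p = Z[1/p] / p^n Z.
  A p-adic number x is represented by the sequence of its canonical residues
  x n in Z[1/p] with 0 <= x n < p^n and x = x n (mod p^n Z_p);
  x 0 is exactly the p-adic fractional part of x.
\<close>

type_synonym padic = "nat \<Rightarrow> rat"

definition rmod :: "rat \<Rightarrow> rat \<Rightarrow> rat" where
  "rmod x m = x - m * of_int \<lfloor>x / m\<rfloor>"

definition pint :: "nat \<Rightarrow> rat \<Rightarrow> bool" where
  "pint p q \<longleftrightarrow> (\<exists>(m::int) (k::nat). q = of_int m / of_nat (p ^ k))"

definition Qp :: "nat \<Rightarrow> padic set" where
  "Qp p = {x. \<forall>n. pint p (x n) \<and> 0 \<le> x n \<and> x n < of_nat (p ^ n)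
                 \<and> x n = rmod (x (Suc n)) (of_nat (p ^ n))}"

text \<open>Embedding of Z[1/p] (rationals whose denominator is a power of p) into Q_p.\<close>
definition qemb :: "nat \<Rightarrow> rat \<Rightarrow> padic" where
  "qemb p q = (\<lambda>n. rmod q (of_nat (p ^ n)))"

definition pzero :: padic where "pzero = (\<lambda>n. 0)"

definition padd :: "nat \<Rightarrow> padic \<Rightarrow> padic \<Rightarrow> padic" where
  "padd p x y = (\<lambda>n. rmod (x n + y n) (of_nat (p ^ n)))"

definition psub :: "nat \<Rightarrow> padic \<Rightarrow> padic \<Rightarrow> padic" where
  "psub p x y = (\<lambda>n. rmod (x n - y n) (of_nat (p ^ n)))"

text \<open>Multiplication by p^{-1}, i.e. x/p.\<close>
definition pdivp :: "nat \<Rightarrow> padic \<Rightarrow> padic" where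
  "pdivp p x = (\<lambda>n. x (Suc n) / of_nat p)"

definition pfrac :: "nat \<Rightarrow> padic \<Rightarrow> padic" where
  "pfrac p x = qemb p (x 0)"

text \<open>p-adic norm: |x|_p = p^(-gamma) for x = p^gamma (x_0 + x_1 p + ...), |0|_p = 0.
  If x 0 (the fractional part) is nonzero its reduced denominator is p^(-gamma);
  otherwise x is in Z_p and gamma is the largest n with x = 0 mod p^n.\<close>
definition pnorm :: "nat \<Rightarrow> padic \<Rightarrow> real" where
  "pnorm p x = (if x 0 \<noteq> 0 then real_of_int (snd (quotient_of (x 0)))
                else if (\<forall>n. x n = 0) then 0
                else real p powi (- int (GREATEST n. x n = 0)))"

definition Ip :: "nat \<Rightarrow> padic set" where
  "Ip p = {a \<in> Qp p. pfrac p a = a}"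

definition pball :: "nat \<Rightarrow> int \<Rightarrow> padic \<Rightarrow> padic set" where
  "pball p \<gamma> a = {x \<in> Qp p. pnorm p (psub p x a) \<le> real p powi \<gamma>}"

text \<open>Haar measure on Q_p: the measure on the sigma-algebra generated by the balls
  (= the Borel sets) with mu(B_gamma(a)) = p^gamma.\<close>
definition haar :: "nat \<Rightarrow> padic measure" where
  "haar p = extend_measure (Qp p) {(\<gamma>, a). a \<in> Qp p} (\<lambda>(\<gamma>, a). pball p \<gamma> a)
              (\<lambda>(\<gamma>, a). ennreal (real p powi \<gamma>))"

definition L2 :: "nat \<Rightarrow> (padic \<Rightarrow> complex) set" where
  "L2 p = {f. f \<in> borel_measurable (haar p) \<and> integrable (haar p) (\<lambda>x. (cmod (f x))\<^sup>2)}"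

end

theory Submission
  imports Defs
begin

text \<open>
  Since \<open>|b|\<^sub>p \<le> p\<^sup>N\<close>, the translate \<open>\<psi>(x - b)\<close> is supported in \<open>B\<^sub>N(0)\<close>, while \<open>x \<mapsto> \<phi>(x/p - a)\<close> is
  supported in \<open>B\<^sub>N\<^sub>-\<^sub>1(p a)\<close>.  Two balls of \<open>\<rat>\<^sub>p\<close> are nested or disjoint, so this ball lies inside
  \<open>B\<^sub>N(0)\<close> or misses it, and for \<open>a \<in> I\<^sub>p\<close> it lies inside exactly when \<open>a = k / p\<^sup>N\<^sup>+\<^sup>1\<close> with
  \<open>0 \<le> k < p\<^sup>N\<^sup>+\<^sup>1\<close>.  Hence dropping all other terms from an approximant \<open>\<Sum> c\<^sub>a \<phi>(x/p - a)\<close> of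
  \<open>\<psi>(x - b)\<close> does not increase the \<open>L\<^sup>2\<close> error: on \<open>B\<^sub>N(0)\<close> nothing changes, and off it both \<open>\<psi>(x - b)\<close>
  and the remaining terms vanish.  So \<open>\<psi>(\<cdot> - b)\<close> lies in the closure of the span of the \<open>p\<^sup>N\<^sup>+\<^sup>1\<close>
  functions \<open>\<phi>(x/p - k/p\<^sup>N\<^sup>+\<^sup>1)\<close>, which is closed, being finite-dimensional.
\<close>

section \<open>Congruences in \<open>\<rat>\<close>\<close>

definition qcong :: "rat \<Rightarrow> rat \<Rightarrow> rat \<Rightarrow> bool" where
  "qcong u v m \<longleftrightarrow> (\<exists>k::int. u - v = of_int k * m)"

lemma qcong_refl [simp]: "qcong u u m"
  unfolding qcong_def by (rule exI[of _ 0]) simp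

lemma qcong_sym: "qcong u v m \<Longrightarrow> qcong v u m"
  unfolding qcong_def by (metis minus_diff_eq mult_minus_left of_int_minus)

lemma qcong_trans: "qcong u v m \<Longrightarrow> qcong v w m \<Longrightarrow> qcong u w m"
  unfolding qcong_def by (metis diff_add_cancel add_diff_eq distrib_right of_int_add)

lemma qcong_add: "qcong u v m \<Longrightarrow> qcong u' v' m \<Longrightarrow> qcong (u + u') (v + v') m"
  unfolding qcong_def by (metis add_diff_add distrib_right of_int_add)

lemma qcong_diff: "qcong u v m \<Longrightarrow> qcong u' v' m \<Longrightarrow> qcong (u - u') (v - v') m"
  unfolding qcong_def by (metis add_diff_add diff_add_cancel left_diff_distrib of_int_diff)

lemma qcong_divisor: "qcong u v m \<Longrightarrow> m = of_int j * m' \<Longrightarrow> qcong u v m'"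
  unfolding qcong_def by (metis mult.assoc of_int_mult)

lemma qcong_cmult_iff: "c \<noteq> 0 \<Longrightarrow> qcong (c * u) (c * v) (c * m) \<longleftrightarrow> qcong u v m"
  unfolding qcong_def by (simp add: right_diff_distrib[symmetric] mult.left_commute)

lemma qcong_subst_left: "qcong u u' m \<Longrightarrow> qcong u v m \<longleftrightarrow> qcong u' v m"
  by (meson qcong_sym qcong_trans)

lemma qcong_subst_right: "qcong v v' m \<Longrightarrow> qcong u v m \<longleftrightarrow> qcong u v' m"
  by (meson qcong_sym qcong_trans)

lemma qcong_diff_left_iff: "qcong (u - w) v m \<longleftrightarrow> qcong u (v + w) m"
  unfolding qcong_def by (simp add: algebra_simps)

lemma qcong_imp_eq:
  assumes "0 \<le> u" "u < m" "0 \<le> v" "v < m" "qcong u v m"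
  shows "u = v"
proof -
  obtain k where k: "u - v = of_int k * m"
    using assms(5) unfolding qcong_def by blast
  have "\<bar>of_int k\<bar> * m = \<bar>u - v\<bar>"
    using k assms by (simp add: abs_mult)
  also have "\<dots> < 1 * m"
    using assms by (simp add: abs_less_iff)
  finally have "\<bar>of_int k\<bar> * m < 1 * m" .
  then have "k = 0"
    using assms by (simp only: mult_less_cancel_right) simp
  with k show ?thesis by simp
qed

lemma rmod_bounds:
  assumes "m > 0"
  shows "0 \<le> rmod u m" "rmod u m < m"
proof -
  have "of_int \<lfloor>u / m\<rfloor> * m \<le> u"
    using of_int_floor_le[of "u / m"] pos_le_divide_eq[OF assms] by blast
  then show "0 \<le> rmod u m"
    unfolding rmod_def by (simp add: mult.commute)
  have "u / m < of_int \<lfloor>u / m\<rfloor> + 1"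
    using floor_correct[of "u / m"] by simp
  then show "rmod u m < m"
    using assms unfolding rmod_def by (simp add: field_simps)
qed

lemma qcong_rmod: "qcong (rmod u m) u m"
  unfolding qcong_def rmod_def by (rule exI[of _ "- \<lfloor>u / m\<rfloor>"]) (simp add: algebra_simps)

lemma rmod_eq_iff:
  assumes "m > 0"
  shows "rmod u m = rmod v m \<longleftrightarrow> qcong u v m"
proof
  assume "rmod u m = rmod v m"
  then show "qcong u v m"
    using qcong_rmod[of u m] qcong_rmod[of v m] by (metis qcong_sym qcong_trans)
next
  assume "qcong u v m"
  then have "qcong (rmod u m) (rmod v m) m"
    using qcong_rmod[of u m] qcong_rmod[of v m] by (metis qcong_sym qcong_trans)
  then show "rmod u m = rmod v m"
    using rmod_bounds[OF assms] by (intro qcong_imp_eq) auto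
qed

lemma rmod_eq_self:
  assumes "0 \<le> u" "u < m"
  shows "rmod u m = u"
proof -
  have "m > 0" using assms by simp
  then show ?thesis
    using qcong_imp_eq[OF rmod_bounds(1,2) assms qcong_rmod] by blast
qed

section \<open>Residue arithmetic in \<open>\<rat>\<^sub>p\<close>\<close>

lemma pint_of_int: "pint p (of_int m)"
  unfolding pint_def by (rule exI[of _ m], rule exI[of _ 0]) simp

lemma pint_of_nat: "pint p (of_nat n)"
  using pint_of_int[of p "int n"] by simp

lemma pint_add:
  assumes "p > 0" "pint p u" "pint p v"
  shows "pint p (u + v)"
proof -
  obtain m k m' k' where u: "u = of_int m / of_nat (p ^ k)" and v: "v = of_int m' / of_nat (p ^ k')"
    using assms unfolding pint_def by blast
  have "u + v = of_int (m * p ^ k' + m' * p ^ k) / of_nat (p ^ (k + k'))"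
    using assms(1) by (simp add: u v field_simps power_add)
  then show ?thesis unfolding pint_def by blast
qed

lemma pint_mult:
  assumes "p > 0" "pint p u" "pint p v"
  shows "pint p (u * v)"
proof -
  obtain m k m' k' where u: "u = of_int m / of_nat (p ^ k)" and v: "v = of_int m' / of_nat (p ^ k')"
    using assms unfolding pint_def by blast
  have "u * v = of_int (m * m') / of_nat (p ^ (k + k'))"
    using assms(1) by (simp add: u v field_simps power_add)
  then show ?thesis unfolding pint_def by blast
qed

lemma pint_uminus: "pint p u \<Longrightarrow> pint p (- u)"
  unfolding pint_def by (metis minus_divide_left of_int_minus)

lemma pint_diff: "p > 0 \<Longrightarrow> pint p u \<Longrightarrow> pint p v \<Longrightarrow> pint p (u - v)"
  using pint_add[of p u "- v"] pint_uminus by simp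

lemma pint_divide_p:
  assumes "p > 0" "pint p u"
  shows "pint p (u / of_nat p)"
proof -
  obtain m k where "u = of_int m / of_nat (p ^ k)"
    using assms unfolding pint_def by blast
  then have "u / of_nat p = of_int m / of_nat (p ^ Suc k)"
    by simp
  then show ?thesis unfolding pint_def by blast
qed

lemma pint_rmod: "p > 0 \<Longrightarrow> pint p u \<Longrightarrow> pint p (rmod u (of_nat (p ^ n)))"
  unfolding rmod_def by (intro pint_diff pint_mult pint_of_int pint_of_nat)

lemma QpD:
  assumes "x \<in> Qp p"
  shows "pint p (x n)" "0 \<le> x n" "x n < of_nat (p ^ n)" "x n = rmod (x (Suc n)) (of_nat (p ^ n))"
  using assms unfolding Qp_def by blast+

lemma Qp_qcong_Suc: "x \<in> Qp p \<Longrightarrow> qcong (x n) (x (Suc n)) (of_nat (p ^ n))"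
  using QpD(4) qcong_rmod by metis

lemma of_nat_power_eq_mult: "n \<le> m \<Longrightarrow> (of_nat (p ^ m) :: rat) = of_int (int (p ^ (m - n))) * of_nat (p ^ n)"
  by (simp flip: power_add)

lemma Qp_qcong:
  assumes "x \<in> Qp p" "n \<le> m"
  shows "qcong (x n) (x m) (of_nat (p ^ n))"
  using assms(2)
proof (induction m rule: dec_induct)
  case (step m)
  have "qcong (x m) (x (Suc m)) (of_nat (p ^ n))"
    using Qp_qcong_Suc[OF assms(1)] of_nat_power_eq_mult[OF step(1)] by (rule qcong_divisor)
  with step show ?case using qcong_trans by blast
qed simp

lemma Qp_rmodI:
  assumes "p > 0" "\<And>n. pint p (w n)" "\<And>n. qcong (w n) (w (Suc n)) (of_nat (p ^ n))"
  shows "(\<lambda>n. rmod (w n) (of_nat (p ^ n))) \<in> Qp p"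
  unfolding Qp_def
proof (safe)
  fix n
  have pos: "(of_nat (p ^ n) :: rat) > 0" using assms(1) by simp
  show "pint p (rmod (w n) (of_nat (p ^ n)))" using pint_rmod assms by blast
  show "0 \<le> rmod (w n) (of_nat (p ^ n))" "rmod (w n) (of_nat (p ^ n)) < of_nat (p ^ n)"
    using rmod_bounds[OF pos] by auto
  have "qcong (rmod (w (Suc n)) (of_nat (p ^ Suc n))) (w (Suc n)) (of_nat (p ^ n))"
    by (rule qcong_divisor[OF qcong_rmod of_nat_power_eq_mult[of n "Suc n" p]]) simp
  then have "qcong (w n) (rmod (w (Suc n)) (of_nat (p ^ Suc n))) (of_nat (p ^ n))"
    using assms(3) qcong_sym qcong_trans by blast
  then show "rmod (w n) (of_nat (p ^ n)) = rmod (rmod (w (Suc n)) (of_nat (p ^ Suc n))) (of_nat (p ^ n))"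
    using rmod_eq_iff[OF pos] by blast
qed

lemma pzero_Qp: "p > 0 \<Longrightarrow> pzero \<in> Qp p"
  unfolding Qp_def pzero_def rmod_def using pint_of_int[of p 0] by simp

lemma qemb_Qp: "p > 0 \<Longrightarrow> pint p q \<Longrightarrow> qemb p q \<in> Qp p"
  unfolding qemb_def by (rule Qp_rmodI) simp_all

lemma padd_Qp: "p > 0 \<Longrightarrow> x \<in> Qp p \<Longrightarrow> c \<in> Qp p \<Longrightarrow> padd p x c \<in> Qp p"
  unfolding padd_def by (intro Qp_rmodI pint_add QpD(1) qcong_add Qp_qcong_Suc)

lemma psub_Qp: "p > 0 \<Longrightarrow> x \<in> Qp p \<Longrightarrow> c \<in> Qp p \<Longrightarrow> psub p x c \<in> Qp p"
  unfolding psub_def by (intro Qp_rmodI pint_diff QpD(1) qcong_diff Qp_qcong_Suc)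

lemma padd_pzero:
  assumes "b \<in> Qp p"
  shows "padd p pzero b = b"
proof
  fix n
  show "padd p pzero b n = b n"
    unfolding padd_def pzero_def using QpD(2,3)[OF assms, of n] by (simp add: rmod_eq_self)
qed

lemma qcong_times_p:
  assumes "p > 0" "qcong u v (of_nat (p ^ n))"
  shows "qcong (of_nat p * u) (of_nat p * v) (of_nat (p ^ Suc n))"
  using qcong_cmult_iff[of "of_nat p" u v "of_nat (p ^ n)"] assms by simp

lemma qcong_divide_p:
  assumes "p > 0" "qcong u v (of_nat (p ^ Suc n))"
  shows "qcong (u / of_nat p) (v / of_nat p) (of_nat (p ^ n))"
  using qcong_cmult_iff[of "of_nat p" "u / of_nat p" "v / of_nat p" "of_nat (p ^ n)"] assms by simp

lemma pdivp_eq_rmod: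
  assumes "p > 0" "x \<in> Qp p"
  shows "pdivp p x = (\<lambda>n. rmod (x (Suc n) / of_nat p) (of_nat (p ^ n)))"
proof
  fix n
  have "0 \<le> x (Suc n) / of_nat p" "x (Suc n) / of_nat p < of_nat (p ^ n)"
    using QpD(2,3)[OF assms(2), of "Suc n"] assms(1) by (simp_all add: divide_less_eq mult.commute)
  then show "pdivp p x n = rmod (x (Suc n) / of_nat p) (of_nat (p ^ n))"
    unfolding pdivp_def by (simp add: rmod_eq_self)
qed

lemma pdivp_Qp: "p > 0 \<Longrightarrow> x \<in> Qp p \<Longrightarrow> pdivp p x \<in> Qp p"
  unfolding pdivp_eq_rmod by (intro Qp_rmodI pint_divide_p QpD(1) qcong_divide_p Qp_qcong_Suc)

text \<open>The centre \<open>p (a + c)\<close> of the ball \<open>{x. x/p - a \<in> B\<^sub>\<gamma>(c)}\<close>.\<close>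

definition pmulp_add :: "nat \<Rightarrow> padic \<Rightarrow> padic \<Rightarrow> padic" where
  "pmulp_add p a c = (\<lambda>n. rmod (of_nat p * (a n + c n)) (of_nat (p ^ n)))"

lemma pmulp_add_Qp:
  assumes "p > 0" "a \<in> Qp p" "c \<in> Qp p"
  shows "pmulp_add p a c \<in> Qp p"
  unfolding pmulp_add_def
proof (intro Qp_rmodI pint_mult pint_of_nat pint_add QpD(1) assms)
  fix n
  have "qcong (of_nat p * (a n + c n)) (of_nat p * (a (Suc n) + c (Suc n))) (of_nat (p ^ Suc n))"
    using assms by (intro qcong_times_p qcong_add Qp_qcong_Suc)
  then show "qcong (of_nat p * (a n + c n)) (of_nat p * (a (Suc n) + c (Suc n))) (of_nat (p ^ n))"
    by (rule qcong_divisor[OF _ of_nat_power_eq_mult[of n "Suc n" p]]) simp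
qed

section \<open>Balls\<close>

text \<open>\<open>B\<^sub>\<gamma>(a)\<close> is the coset \<open>a + p\<^sup>-\<^sup>\<gamma> \<int>\<^sub>p\<close>; on residues this becomes a congruence modulo \<open>p\<^sup>-\<^sup>\<gamma>\<close>.\<close>

definition ball_modulus :: "nat \<Rightarrow> int \<Rightarrow> rat" where
  "ball_modulus p \<gamma> = of_nat p powi (- \<gamma>)"

lemma ball_modulus_of_nat_power: "ball_modulus p (- int j) = of_nat (p ^ j)"
  unfolding ball_modulus_def by simp

lemma ball_modulus_mono:
  assumes "p > 0" "\<gamma> \<le> \<gamma>'"
  shows "ball_modulus p \<gamma> = of_int (int p ^ nat (\<gamma>' - \<gamma>)) * ball_modulus p \<gamma>'"
proof -
  obtain d where d: "\<gamma>' - \<gamma> = int d"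
    using assms(2) zero_le_imp_eq_int by (metis diff_ge_0_iff_ge)
  have "ball_modulus p \<gamma> = of_nat p powi ((\<gamma>' - \<gamma>) + (- \<gamma>'))"
    unfolding ball_modulus_def by simp
  also have "\<dots> = of_nat p powi (\<gamma>' - \<gamma>) * of_nat p powi (- \<gamma>')"
    using assms(1) by (intro power_int_add) simp
  finally show ?thesis
    unfolding ball_modulus_def d by simp
qed

lemma qcong_ball_modulus_mono:
  "p > 0 \<Longrightarrow> \<gamma> \<le> \<gamma>' \<Longrightarrow> qcong u v (ball_modulus p \<gamma>) \<Longrightarrow> qcong u v (ball_modulus p \<gamma>')"
  by (rule qcong_divisor[OF _ ball_modulus_mono])

lemma qcong_ball_modulus_if_power:
  "p > 0 \<Longrightarrow> nat (- \<gamma>) \<le> j \<Longrightarrow> qcong u v (of_nat (p ^ j)) \<Longrightarrow> qcong u v (ball_modulus p \<gamma>)"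
  using qcong_ball_modulus_mono[of p "- int j" \<gamma>] by (simp add: ball_modulus_of_nat_power)

lemma qcong_rmod_ball_modulus:
  "p > 0 \<Longrightarrow> nat (- \<gamma>) \<le> j \<Longrightarrow> qcong (rmod u (of_nat (p ^ j))) u (ball_modulus p \<gamma>)"
  by (rule qcong_ball_modulus_if_power[OF _ _ qcong_rmod])

lemma Qp_qcong_ball_modulus:
  "x \<in> Qp p \<Longrightarrow> p > 0 \<Longrightarrow> nat (- \<gamma>) \<le> j \<Longrightarrow> j \<le> j' \<Longrightarrow> qcong (x j) (x j') (ball_modulus p \<gamma>)"
  by (rule qcong_ball_modulus_if_power[OF _ _ Qp_qcong])

lemma Qp_qcong_zero_iff:
  assumes "x \<in> Qp p"
  shows "qcong (x n) 0 (of_nat (p ^ n)) \<longleftrightarrow> x n = 0"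
proof
  assume "qcong (x n) 0 (of_nat (p ^ n))"
  moreover have "0 \<le> x n" "x n < of_nat (p ^ n)"
    using QpD(2,3)[OF assms] by auto
  ultimately show "x n = 0"
    by (metis qcong_imp_eq order.refl order_le_less_trans)
qed simp

lemma Qp_zero_below:
  assumes "x \<in> Qp p" "x n = 0" "m \<le> n"
  shows "x m = 0"
  using Qp_qcong[OF assms(1,3)] Qp_qcong_zero_iff[OF assms(1)] assms(2) by simp

lemma power_int_le_iff_exp:
  assumes "(1::real) < a"
  shows "a powi m \<le> a powi n \<longleftrightarrow> m \<le> n"
proof
  assume "a powi m \<le> a powi n"
  then show "m \<le> n"
    using power_int_strict_increasing[OF _ assms, of n m] by (cases "n < m") auto
next
  assume "m \<le> n"
  then show "a powi m \<le> a powi n"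
    using power_int_increasing[of m n a] assms by simp
qed

lemma pnorm_le_iff_residue_zero:
  assumes p: "p > 1" and y: "y \<in> Qp p" and y0: "y 0 = 0"
  shows "pnorm p y \<le> real p powi (- int m) \<longleftrightarrow> y m = 0"
proof (cases "\<forall>n. y n = 0")
  case True
  then show ?thesis unfolding pnorm_def using p by simp
next
  case False
  then obtain n0 where n0: "y n0 \<noteq> 0" by blast
  have bounded: "y n = 0 \<Longrightarrow> n \<le> n0" for n
    using Qp_zero_below[OF y, of n n0] n0 by (cases "n \<le> n0") auto
  define g where "g = (GREATEST n. y n = 0)"
  have "y g = 0" "y n = 0 \<Longrightarrow> n \<le> g" for n
    unfolding g_def using GreatestI_nat[of "\<lambda>n. y n = 0" 0 n0] Greatest_le_nat[of "\<lambda>n. y n = 0" n n0]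
      y0 bounded by blast+
  then have zero_iff: "y n = 0 \<longleftrightarrow> n \<le> g" for n
    using Qp_zero_below[OF y] by blast
  have "\<not> y 0 \<noteq> 0" using y0 by simp
  then have "pnorm p y = real p powi (- int g)"
    unfolding pnorm_def g_def if_not_P[OF False] by simp
  moreover have "real p powi (- int g) \<le> real p powi (- int m) \<longleftrightarrow> m \<le> g"
    using power_int_le_iff_exp[of "real p" "- int g" "- int m"] p by simp
  ultimately show ?thesis
    using zero_iff[of m] by metis
qed

lemma rat_denom_dvd_iff: "snd (quotient_of q) dvd n \<longleftrightarrow> (\<exists>t. q * of_int n = of_int t)"
proof -
  obtain a d where ad: "quotient_of q = (a, d)" by (cases "quotient_of q")
  have d0: "d > 0" and cop: "coprime a d" and q: "q = of_int a / of_int d"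
    using quotient_of_denom_pos[OF ad] quotient_of_coprime[OF ad] quotient_of_div[OF ad] by auto
  have "(\<exists>t. q * of_int n = of_int t) \<longleftrightarrow> d dvd a * n"
    unfolding q using d0
    by (auto simp: dvd_def field_simps of_int_mult[symmetric] simp del: of_int_mult)
  also have "\<dots> \<longleftrightarrow> d dvd n"
    using cop by (simp add: coprime_commute coprime_dvd_mult_right_iff)
  finally show ?thesis using ad by simp
qed

lemma pint_denom_prime_power:
  assumes p: "prime p" and q: "pint p q"
  shows "\<exists>i. snd (quotient_of q) = int p ^ i"
proof -
  define d where "d = snd (quotient_of q)"
  obtain m k where "q = of_int m / of_nat (p ^ k)"
    using q unfolding pint_def by blast
  then have "q * of_int (int p ^ k) = of_int m"
    using p by (simp add: prime_gt_0_nat)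
  then have "d dvd int p ^ k"
    unfolding d_def using rat_denom_dvd_iff by blast
  moreover have "prime (int p)" using p by simp
  ultimately obtain i where "normalize d = int p ^ i"
    using divides_primepow by blast
  moreover have "d > 0"
    unfolding d_def by (rule quotient_of_denom_pos')
  ultimately show ?thesis
    unfolding d_def[symmetric] by auto
qed

lemma pint_denom_le_iff:
  assumes p: "prime p" and q: "pint p q"
  shows "real_of_int (snd (quotient_of q)) \<le> real p ^ G \<longleftrightarrow> qcong q 0 (ball_modulus p (int G))"
proof -
  have p1: "p > 1" using p prime_gt_1_nat by blast
  obtain i where d: "snd (quotient_of q) = int p ^ i"
    using pint_denom_prime_power[OF p q] by blast
  have "real_of_int (snd (quotient_of q)) \<le> real p ^ G \<longleftrightarrow> i \<le> G"
    unfolding d using p1 by simp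
  also have "\<dots> \<longleftrightarrow> snd (quotient_of q) dvd int p ^ G"
  proof
    assume "i \<le> G"
    then show "snd (quotient_of q) dvd int p ^ G"
      unfolding d by (rule le_imp_power_dvd)
  next
    assume "snd (quotient_of q) dvd int p ^ G"
    then have "int p ^ i \<le> int p ^ G"
      unfolding d using p1 by (intro zdvd_imp_le) auto
    then show "i \<le> G"
      using p1 by (intro power_le_imp_le_exp[of "int p"]) auto
  qed
  also have "\<dots> \<longleftrightarrow> (\<exists>t. q * of_int (int p ^ G) = of_int t)"
    by (rule rat_denom_dvd_iff)
  also have "\<dots> \<longleftrightarrow> qcong q 0 (ball_modulus p (int G))"
  proof -
    have "ball_modulus p (int G) = 1 / of_nat p ^ G"
      unfolding ball_modulus_def by (simp add: power_int_minus_divide)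
    moreover have "q = of_int t * (1 / of_nat p ^ G) \<longleftrightarrow> q * of_nat p ^ G = of_int t" for t
      using p1 by (auto simp: field_simps)
    ultimately show ?thesis
      unfolding qcong_def by simp
  qed
  finally show ?thesis .
qed

lemma pnorm_le_power_int_neg_iff:
  assumes p1: "p > 1" and y: "y \<in> Qp p" and m: "m \<ge> 1"
  shows "pnorm p y \<le> real p powi (- int m) \<longleftrightarrow> y m = 0"
proof (cases "y 0 = 0")
  case True
  then show ?thesis by (rule pnorm_le_iff_residue_zero[OF p1 y])
next
  case False
  have "real p powi (- int m) < 1"
    using power_int_strict_increasing[of "- int m" 0 "real p"] p1 m by simp
  moreover have "pnorm p y \<ge> 1"
    unfolding pnorm_def using False quotient_of_denom_pos'[of "y 0"] by simp
  moreover have "y m \<noteq> 0"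
    using Qp_zero_below[OF y, of m 0] False by auto
  ultimately show ?thesis by simp
qed

lemma pnorm_le_power_iff:
  assumes p: "prime p" and y: "y \<in> Qp p"
  shows "pnorm p y \<le> real p ^ G \<longleftrightarrow> qcong (y 0) 0 (ball_modulus p (int G))"
proof (cases "y 0 = 0")
  case True
  have p1: "p > 1" using p prime_gt_1_nat by blast
  have "pnorm p y \<le> real p powi 0"
    using pnorm_le_iff_residue_zero[OF p1 y True, of 0] True by simp
  also have "\<dots> \<le> real p ^ G"
    using p1 by simp
  finally show ?thesis
    using True by simp
next
  case False
  then have "pnorm p y = real_of_int (snd (quotient_of (y 0)))"
    unfolding pnorm_def by simp
  then show ?thesis
    using pint_denom_le_iff[OF p QpD(1)[OF y]] by simp
qed

lemma pnorm_le_powi_iff: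
  assumes p: "prime p" and y: "y \<in> Qp p"
  shows "pnorm p y \<le> real p powi \<gamma> \<longleftrightarrow> qcong (y (nat (- \<gamma>))) 0 (ball_modulus p \<gamma>)"
proof (cases "\<gamma> < 0")
  case True
  define m where "m = nat (- \<gamma>)"
  have \<gamma>: "\<gamma> = - int m" and m: "m \<ge> 1"
    using True unfolding m_def by auto
  show ?thesis
    using pnorm_le_power_int_neg_iff[OF _ y m] Qp_qcong_zero_iff[OF y, of m] prime_gt_1_nat[OF p]
    unfolding \<gamma> ball_modulus_of_nat_power by simp
next
  case False
  define G where "G = nat \<gamma>"
  have \<gamma>: "\<gamma> = int G" and "nat (- \<gamma>) = 0"
    using False unfolding G_def by auto
  then show ?thesis
    using pnorm_le_power_iff[OF p y] by simp
qed

lemma pball_iff_qcong: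
  assumes p: "prime p" and c: "c \<in> Qp p" and x: "x \<in> Qp p" and j: "nat (- \<gamma>) \<le> j"
  shows "x \<in> pball p \<gamma> c \<longleftrightarrow> qcong (x j) (c j) (ball_modulus p \<gamma>)"
proof -
  have p0: "p > 0" using p prime_gt_0_nat by blast
  define j0 where "j0 = nat (- \<gamma>)"
  have "x \<in> pball p \<gamma> c \<longleftrightarrow> qcong (psub p x c j0) 0 (ball_modulus p \<gamma>)"
    unfolding pball_def j0_def using x pnorm_le_powi_iff[OF p psub_Qp[OF p0 x c]] by simp
  also have "\<dots> \<longleftrightarrow> qcong (x j0 - c j0) 0 (ball_modulus p \<gamma>)"
    unfolding psub_def by (rule qcong_subst_left[OF qcong_rmod_ball_modulus[OF p0]]) (simp add: j0_def)
  also have "\<dots> \<longleftrightarrow> qcong (x j) (c j) (ball_modulus p \<gamma>)"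
    using qcong_subst_left[OF Qp_qcong_ball_modulus[OF x p0 _ j]]
      qcong_subst_right[OF Qp_qcong_ball_modulus[OF c p0 _ j]]
    by (simp add: j0_def qcong_diff_left_iff)
  finally show ?thesis .
qed

lemma pball_subset_Qp: "pball p \<gamma> c \<subseteq> Qp p"
  unfolding pball_def by auto

lemma pball_nested:
  assumes p: "prime p" and a: "a \<in> Qp p" and a': "a' \<in> Qp p" and \<gamma>: "\<gamma> \<le> \<gamma>'"
    and x: "x \<in> pball p \<gamma> a" "x \<in> pball p \<gamma>' a'"
  shows "pball p \<gamma> a \<subseteq> pball p \<gamma>' a'"
proof
  have p0: "p > 0" using p prime_gt_0_nat by blast
  define j where "j = nat (- \<gamma>)"
  have j: "nat (- \<gamma>) \<le> j" "nat (- \<gamma>') \<le> j"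
    unfolding j_def using \<gamma> by auto
  have xQ: "x \<in> Qp p" using x pball_subset_Qp by blast
  have xa: "qcong (x j) (a j) (ball_modulus p \<gamma>')"
    using x(1) pball_iff_qcong[OF p a xQ j(1)] qcong_ball_modulus_mono[OF p0 \<gamma>] by simp
  have xa': "qcong (x j) (a' j) (ball_modulus p \<gamma>')"
    using x(2) pball_iff_qcong[OF p a' xQ j(2)] by simp
  fix y assume y: "y \<in> pball p \<gamma> a"
  have yQ: "y \<in> Qp p" using y pball_subset_Qp by blast
  have "qcong (y j) (a j) (ball_modulus p \<gamma>')"
    using y pball_iff_qcong[OF p a yQ j(1)] qcong_ball_modulus_mono[OF p0 \<gamma>] by simp
  then have "qcong (y j) (a' j) (ball_modulus p \<gamma>')"
    by (rule qcong_trans[OF qcong_trans[OF _ qcong_sym[OF xa]] xa'])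
  then show "y \<in> pball p \<gamma>' a'"
    using pball_iff_qcong[OF p a' yQ j(2)] by simp
qed

lemma Qp_subset_UN_pball:
  assumes p: "prime p" and x: "x \<in> Qp p"
  shows "\<exists>i::nat. x \<in> pball p (int i) pzero"
proof -
  have p0: "p > 0" using p prime_gt_0_nat by blast
  obtain m k where mk: "x 0 = of_int m / of_nat (p ^ k)"
    using QpD(1)[OF x, of 0] unfolding pint_def by blast
  have "qcong (x 0) (pzero 0) (ball_modulus p (int k))"
    unfolding qcong_def pzero_def mk ball_modulus_def by (intro exI[of _ m]) (simp add: power_int_minus_divide)
  then show ?thesis
    using pball_iff_qcong[OF p pzero_Qp[OF p0] x, of "int k" 0] by auto
qed

lemma psub_in_pball_iff:
  assumes p: "prime p" and x: "x \<in> Qp p" and b: "b \<in> Qp p" and c: "c \<in> Qp p"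
  shows "psub p x b \<in> pball p \<gamma> c \<longleftrightarrow> x \<in> pball p \<gamma> (padd p c b)"
proof -
  have p0: "p > 0" using p prime_gt_0_nat by blast
  define j where "j = nat (- \<gamma>)"
  have j: "nat (- \<gamma>) \<le> j" unfolding j_def by simp
  have "psub p x b \<in> pball p \<gamma> c \<longleftrightarrow> qcong (psub p x b j) (c j) (ball_modulus p \<gamma>)"
    by (rule pball_iff_qcong[OF p c psub_Qp[OF p0 x b] j])
  also have "\<dots> \<longleftrightarrow> qcong (x j) (c j + b j) (ball_modulus p \<gamma>)"
    unfolding psub_def qcong_subst_left[OF qcong_rmod_ball_modulus[OF p0 j]] by (rule qcong_diff_left_iff)
  also have "\<dots> \<longleftrightarrow> qcong (x j) (padd p c b j) (ball_modulus p \<gamma>)"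
    unfolding padd_def by (rule qcong_subst_right[OF qcong_sym[OF qcong_rmod_ball_modulus[OF p0 j]]])
  also have "\<dots> \<longleftrightarrow> x \<in> pball p \<gamma> (padd p c b)"
    by (rule pball_iff_qcong[OF p padd_Qp[OF p0 c b] x j, symmetric])
  finally show ?thesis .
qed

lemma pdivp_psub_in_pball_iff:
  assumes p: "prime p" and x: "x \<in> Qp p" and a: "a \<in> Qp p" and c: "c \<in> Qp p"
  shows "psub p (pdivp p x) a \<in> pball p \<gamma> c \<longleftrightarrow> x \<in> pball p (\<gamma> - 1) (pmulp_add p a c)"
proof -
  have p0: "p > 0" using p prime_gt_0_nat by blast
  define j where "j = nat (- \<gamma>)"
  have j: "nat (- \<gamma>) \<le> j" and j': "nat (- (\<gamma> - 1)) \<le> Suc j"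
    unfolding j_def by auto
  have pp: "(of_nat p :: rat) \<noteq> 0" using p0 by simp
  have "psub p (pdivp p x) a \<in> pball p \<gamma> c
      \<longleftrightarrow> qcong (psub p (pdivp p x) a j) (c j) (ball_modulus p \<gamma>)"
    by (rule pball_iff_qcong[OF p c psub_Qp[OF p0 pdivp_Qp[OF p0 x] a] j])
  also have "\<dots> \<longleftrightarrow> qcong (x (Suc j) / of_nat p) (c j + a j) (ball_modulus p \<gamma>)"
    unfolding psub_def pdivp_def qcong_subst_left[OF qcong_rmod_ball_modulus[OF p0 j]]
    by (rule qcong_diff_left_iff)
  also have "\<dots> \<longleftrightarrow> qcong (x (Suc j)) (of_nat p * (a j + c j)) (ball_modulus p (\<gamma> - 1))"
    using qcong_cmult_iff[OF pp, of "x (Suc j) / of_nat p" "c j + a j" "ball_modulus p \<gamma>"]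
      ball_modulus_mono[OF p0, of "\<gamma> - 1" \<gamma>] pp
    by (simp add: add.commute)
  also have "\<dots> \<longleftrightarrow> qcong (x (Suc j)) (pmulp_add p a c (Suc j)) (ball_modulus p (\<gamma> - 1))"
  proof (rule qcong_subst_right)
    have "qcong (of_nat p * (a j + c j)) (of_nat p * (a (Suc j) + c (Suc j))) (of_nat (p ^ Suc j))"
      by (intro qcong_times_p p0 qcong_add Qp_qcong_Suc a c)
    then have "qcong (of_nat p * (a j + c j)) (of_nat p * (a (Suc j) + c (Suc j))) (ball_modulus p (\<gamma> - 1))"
      by (rule qcong_ball_modulus_if_power[OF p0 j'])
    then show "qcong (of_nat p * (a j + c j)) (pmulp_add p a c (Suc j)) (ball_modulus p (\<gamma> - 1))"
      unfolding pmulp_add_def by (rule qcong_trans[OF _ qcong_sym[OF qcong_rmod_ball_modulus[OF p0 j']]])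
  qed
  also have "\<dots> \<longleftrightarrow> x \<in> pball p (\<gamma> - 1) (pmulp_add p a c)"
    by (rule pball_iff_qcong[OF p pmulp_add_Qp[OF p0 a c] x j', symmetric])
  finally show ?thesis .
qed

lemma pball_centre: "prime p \<Longrightarrow> c \<in> Qp p \<Longrightarrow> c \<in> pball p \<gamma> c"
  using pball_iff_qcong[of p c c \<gamma> "nat (- \<gamma>)"] by simp

lemma pball_sym:
  assumes p: "prime p" and b: "b \<in> Qp p" and c: "c \<in> Qp p"
  shows "b \<in> pball p \<gamma> c \<longleftrightarrow> c \<in> pball p \<gamma> b"
  using pball_iff_qcong[OF p c b order.refl] pball_iff_qcong[OF p b c order.refl] qcong_sym by blast

lemma pball_subset_iff_centre:
  assumes p: "prime p" and c: "c \<in> Qp p" and c': "c' \<in> Qp p" and \<gamma>: "\<gamma> \<le> \<gamma>'"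
  shows "pball p \<gamma> c \<subseteq> pball p \<gamma>' c' \<longleftrightarrow> c \<in> pball p \<gamma>' c'"
  using pball_nested[OF p c c' \<gamma>] pball_centre[OF p c] by blast

lemma pball_eq_if_mem:
  assumes p: "prime p" and b: "b \<in> Qp p" and c: "c \<in> Qp p" and bc: "b \<in> pball p \<gamma> c"
  shows "pball p \<gamma> b = pball p \<gamma> c"
  using pball_subset_iff_centre[OF p b c order.refl] pball_subset_iff_centre[OF p c b order.refl]
    pball_sym[OF p b c] bc by blast

lemma psub_in_pball_pzero_iff:
  assumes p: "prime p" and x: "x \<in> Qp p" and b: "b \<in> pball p \<gamma> pzero"
  shows "psub p x b \<in> pball p \<gamma> pzero \<longleftrightarrow> x \<in> pball p \<gamma> pzero"
proof -
  have p0: "p > 0" using p prime_gt_0_nat by blast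
  have bQ: "b \<in> Qp p" using b pball_subset_Qp by blast
  show ?thesis
    using psub_in_pball_iff[OF p x bQ pzero_Qp[OF p0]] padd_pzero[OF bQ]
      pball_eq_if_mem[OF p bQ pzero_Qp[OF p0] b] by simp
qed

lemma pnorm_le_imp_in_pball_pzero:
  assumes p: "prime p" and b: "b \<in> Qp p" and norm: "pnorm p b \<le> real p powi \<gamma>"
  shows "b \<in> pball p \<gamma> pzero"
  using pnorm_le_powi_iff[OF p b] pball_iff_qcong[OF p pzero_Qp b order.refl] norm prime_gt_0_nat[OF p]
  by (simp add: pzero_def)

section \<open>Haar measure\<close>

definition balls :: "nat \<Rightarrow> padic set set" where
  "balls p = (\<lambda>(\<gamma>, a). pball p \<gamma> a) ` {(\<gamma>, a). a \<in> Qp p}"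

lemma balls_subset_Pow: "balls p \<subseteq> Pow (Qp p)"
  unfolding balls_def pball_def by auto

lemma pball_in_balls: "a \<in> Qp p \<Longrightarrow> pball p \<gamma> a \<in> balls p"
  unfolding balls_def by auto

lemma space_haar: "space (haar p) = Qp p"
  unfolding haar_def using balls_subset_Pow[of p] unfolding balls_def
  by (intro space_extend_measure) auto

lemma sets_haar: "sets (haar p) = sigma_sets (Qp p) (balls p)"
  unfolding haar_def using balls_subset_Pow[of p] unfolding balls_def
  by (intro sets_extend_measure) auto

lemma pball_sets_haar: "a \<in> Qp p \<Longrightarrow> pball p \<gamma> a \<in> sets (haar p)"
  unfolding sets_haar by (auto intro: sigma_sets.Basic pball_in_balls)

definition haar_normalised :: "nat \<Rightarrow> bool" where
  "haar_normalised p \<longleftrightarrow>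
     (\<forall>\<gamma> a. a \<in> Qp p \<longrightarrow> emeasure (haar p) (pball p \<gamma> a) = ennreal (real p powi \<gamma>))"

text \<open>\<open>extend_measure\<close> returns the null measure when no measure with the prescribed
  values on the balls exists.\<close>

lemma haar_normalised_or_null: "haar_normalised p \<or> (\<forall>A. emeasure (haar p) A = 0)"
proof -
  let ?I = "{(\<gamma>, a). a \<in> Qp p}"
  let ?G = "\<lambda>(\<gamma>, a). pball p \<gamma> a"
  let ?\<mu> = "\<lambda>(\<gamma>::int, a::padic). ennreal (real p powi \<gamma>)"
  have G: "?G ` ?I \<subseteq> Pow (Qp p)"
    using balls_subset_Pow[of p] unfolding balls_def by simp
  show ?thesis
  proof (cases "\<exists>\<mu>'. (\<forall>i\<in>?I. \<mu>' (?G i) = ?\<mu> i) \<and> measure_space (Qp p) (sigma_sets (Qp p) (?G ` ?I)) \<mu>'")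
    case True
    then obtain \<mu>' where eq: "\<forall>i\<in>?I. \<mu>' (?G i) = ?\<mu> i"
      and ms: "measure_space (Qp p) (sigma_sets (Qp p) (?G ` ?I)) \<mu>'" by blast
    have "sets (haar p) = sigma_sets (Qp p) (?G ` ?I)"
      using sets_haar[of p] unfolding balls_def by simp
    then have "positive (sets (haar p)) \<mu>'" "countably_additive (sets (haar p)) \<mu>'"
      using ms unfolding measure_space_def by auto
    then have "emeasure (haar p) (?G (\<gamma>, a)) = ?\<mu> (\<gamma>, a)" if "a \<in> Qp p" for \<gamma> a
      using eq that by (intro emeasure_extend_measure[OF haar_def _ G]) auto
    then show ?thesis
      unfolding haar_normalised_def by simp
  next
    case False
    then have "haar p = measure_of (Qp p) (?G ` ?I) (\<lambda>_. 0)"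
      unfolding haar_def extend_measure_def by (intro if_not_P) blast
    then show ?thesis
      by (simp add: emeasure_measure_of_conv)
  qed
qed

lemma AE_null_measure: "(\<And>A. emeasure M A = 0) \<Longrightarrow> AE x in M. P x"
  by (rule AE_I'[of "space M"]) auto

lemma Int_stable_balls: "prime p \<Longrightarrow> Int_stable (insert {} (balls p))"
proof (rule Int_stableI)
  fix A B assume p: "prime p" and A: "A \<in> insert {} (balls p)" and B: "B \<in> insert {} (balls p)"
  show "A \<inter> B \<in> insert {} (balls p)"
  proof (cases "A \<inter> B = {}")
    case False
    then obtain \<gamma> a \<gamma>' a' where a: "a \<in> Qp p" "A = pball p \<gamma> a" and a': "a' \<in> Qp p" "B = pball p \<gamma>' a'"
      using A B unfolding balls_def by auto
    from False obtain x where "x \<in> A" "x \<in> B" by blast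
    then have "A \<subseteq> B \<or> B \<subseteq> A"
      using pball_nested[OF p a(1) a'(1)] pball_nested[OF p a'(1) a(1)] a a' by (cases "\<gamma> \<le> \<gamma>'") auto
    then show ?thesis
      using A B by (auto simp: Int_absorb1 Int_absorb2)
  qed simp
qed

lemma UN_pball_pzero:
  assumes "prime p"
  shows "(\<Union>i::nat. pball p (int i) pzero) = Qp p"
proof
  show "(\<Union>i. pball p (int i) pzero) \<subseteq> Qp p"
    by (rule UN_least) (rule pball_subset_Qp)
  show "Qp p \<subseteq> (\<Union>i. pball p (int i) pzero)"
    using Qp_subset_UN_pball[OF assms] by auto
qed

lemma sigma_sets_insert_empty: "sigma_sets \<Omega> (insert {} E) = sigma_sets \<Omega> E"
proof
  show "sigma_sets \<Omega> (insert {} E) \<subseteq> sigma_sets \<Omega> E"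
    by (rule sigma_sets_mono) (auto intro: sigma_sets.Basic sigma_sets.Empty)
  show "sigma_sets \<Omega> E \<subseteq> sigma_sets \<Omega> (insert {} E)"
    by (rule sigma_sets_mono') auto
qed

lemma measurable_haar_if_vimage_pball:
  assumes T: "T \<in> Qp p \<rightarrow> Qp p"
    and vimage: "\<And>\<gamma> c. c \<in> Qp p \<Longrightarrow> \<exists>\<gamma>' c'. c' \<in> Qp p \<and> T -` pball p \<gamma> c \<inter> Qp p = pball p \<gamma>' c'"
  shows "T \<in> haar p \<rightarrow>\<^sub>M haar p"
proof (rule measurable_sigma_sets[OF sets_haar balls_subset_Pow])
  show "T \<in> space (haar p) \<rightarrow> Qp p" using T space_haar by simp
  fix y assume "y \<in> balls p"
  then obtain \<gamma> c where c: "c \<in> Qp p" and y: "y = pball p \<gamma> c" unfolding balls_def by auto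
  obtain \<gamma>' c' where "c' \<in> Qp p" "T -` pball p \<gamma> c \<inter> Qp p = pball p \<gamma>' c'"
    using vimage[OF c] by blast
  then show "T -` y \<inter> space (haar p) \<in> sets (haar p)"
    unfolding space_haar y by (simp add: pball_sets_haar)
qed

text \<open>Balls form an \<open>\<inter>\<close>-stable generator of the Borel sets, so a map pulling balls of radius \<open>p\<^sup>\<gamma>\<close>
  back to balls of radius \<open>p\<^sup>\<gamma>\<^sup>-\<^sup>s\<close> scales Haar measure by \<open>p\<^sup>-\<^sup>s\<close>.\<close>

lemma haar_transform:
  assumes p: "prime p" and normalised: "haar_normalised p" and T: "T \<in> Qp p \<rightarrow> Qp p"
    and centre: "\<And>\<gamma> c. c \<in> Qp p \<Longrightarrow> C \<gamma> c \<in> Qp p"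
    and vimage: "\<And>x \<gamma> c. x \<in> Qp p \<Longrightarrow> c \<in> Qp p \<Longrightarrow> T x \<in> pball p \<gamma> c \<longleftrightarrow> x \<in> pball p (\<gamma> - s) (C \<gamma> c)"
  shows "T \<in> haar p \<rightarrow>\<^sub>M haar p"
    and "distr (haar p) (haar p) T = scale_measure (ennreal (real p powi (- s))) (haar p)"
proof -
  have p0: "p > 0" using p prime_gt_0_nat by blast
  have pre: "T -` pball p \<gamma> c \<inter> Qp p = pball p (\<gamma> - s) (C \<gamma> c)" if "c \<in> Qp p" for \<gamma> c
    using vimage[OF _ that] pball_subset_Qp by blast
  show Tm: "T \<in> haar p \<rightarrow>\<^sub>M haar p"
  proof (rule measurable_haar_if_vimage_pball[OF T])
    fix \<gamma> c assume c: "c \<in> Qp p"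
    show "\<exists>\<gamma>' c'. c' \<in> Qp p \<and> T -` pball p \<gamma> c \<inter> Qp p = pball p \<gamma>' c'"
      by (intro exI[of _ "\<gamma> - s"] exI[of _ "C \<gamma> c"] conjI centre[OF c] pre[OF c])
  qed
  have distr_pball: "emeasure (distr (haar p) (haar p) T) (pball p \<gamma> c)
      = ennreal (real p powi (- s)) * emeasure (haar p) (pball p \<gamma> c)" if c: "c \<in> Qp p" for \<gamma> c
  proof -
    have "emeasure (distr (haar p) (haar p) T) (pball p \<gamma> c) = ennreal (real p powi (\<gamma> - s))"
      using emeasure_distr[OF Tm pball_sets_haar[OF c]] pre[OF c] normalised centre[OF c]
      unfolding space_haar haar_normalised_def by simp
    also have "real p powi (\<gamma> - s) = real p powi (- s) * real p powi \<gamma>"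
      using p0 power_int_add[of "real p" "- s" \<gamma>] by simp
    finally show ?thesis
      using normalised c p0 unfolding haar_normalised_def by (simp add: ennreal_mult)
  qed
  show "distr (haar p) (haar p) T = scale_measure (ennreal (real p powi (- s))) (haar p)"
  proof (rule measure_eqI_generator_eq[OF Int_stable_balls[OF p], where \<Omega> = "Qp p"
        and A = "\<lambda>i. pball p (int i) pzero"])
    show "insert {} (balls p) \<subseteq> Pow (Qp p)" using balls_subset_Pow by auto
    show "sets (distr (haar p) (haar p) T) = sigma_sets (Qp p) (insert {} (balls p))"
      "sets (scale_measure (ennreal (real p powi - s)) (haar p)) = sigma_sets (Qp p) (insert {} (balls p))"
      by (simp_all add: sets_haar sigma_sets_insert_empty)
    show "range (\<lambda>i. pball p (int i) pzero) \<subseteq> insert {} (balls p)"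
      using pball_in_balls[OF pzero_Qp[OF p0]] by auto
    show "(\<Union>i. pball p (int i) pzero) = Qp p" by (rule UN_pball_pzero[OF p])
    show "emeasure (distr (haar p) (haar p) T) (pball p (int i) pzero) \<noteq> \<infinity>" for i
      using distr_pball[OF pzero_Qp[OF p0]] normalised pzero_Qp[OF p0]
      unfolding haar_normalised_def by (simp add: ennreal_mult_eq_top_iff)
    fix X assume "X \<in> insert {} (balls p)"
    then show "emeasure (distr (haar p) (haar p) T) X = emeasure (scale_measure (ennreal (real p powi - s)) (haar p)) X"
      using distr_pball unfolding balls_def by auto
  qed
qed

lemma haar_translation:
  assumes p: "prime p" and normalised: "haar_normalised p" and b: "b \<in> Qp p"
  shows "(\<lambda>x. psub p x b) \<in> haar p \<rightarrow>\<^sub>M haar p"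
    and "distr (haar p) (haar p) (\<lambda>x. psub p x b) = scale_measure 1 (haar p)"
proof -
  have p0: "p > 0" using p prime_gt_0_nat by blast
  note transform = haar_transform[OF p normalised, of "\<lambda>x. psub p x b" "\<lambda>\<gamma> c. padd p c b" 0]
  have "(\<lambda>x. psub p x b) \<in> Qp p \<rightarrow> Qp p"
    using psub_Qp[OF p0 _ b] by blast
  then show "(\<lambda>x. psub p x b) \<in> haar p \<rightarrow>\<^sub>M haar p"
    and "distr (haar p) (haar p) (\<lambda>x. psub p x b) = scale_measure 1 (haar p)"
    using transform padd_Qp[OF p0 _ b] psub_in_pball_iff[OF p _ b] by simp_all
qed

lemma haar_dilation:
  assumes p: "prime p" and normalised: "haar_normalised p" and a: "a \<in> Qp p"
  shows "(\<lambda>x. psub p (pdivp p x) a) \<in> haar p \<rightarrow>\<^sub>M haar p"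
    and "distr (haar p) (haar p) (\<lambda>x. psub p (pdivp p x) a)
      = scale_measure (ennreal (inverse (real p))) (haar p)"
proof -
  have p0: "p > 0" using p prime_gt_0_nat by blast
  note transform = haar_transform[OF p normalised, of "\<lambda>x. psub p (pdivp p x) a" "\<lambda>\<gamma> c. pmulp_add p a c" 1]
  have "(\<lambda>x. psub p (pdivp p x) a) \<in> Qp p \<rightarrow> Qp p"
    using psub_Qp[OF p0 pdivp_Qp[OF p0] a] by blast
  then show "(\<lambda>x. psub p (pdivp p x) a) \<in> haar p \<rightarrow>\<^sub>M haar p"
    and "distr (haar p) (haar p) (\<lambda>x. psub p (pdivp p x) a)
      = scale_measure (ennreal (inverse (real p))) (haar p)"
    using transform pmulp_add_Qp[OF p0 a] pdivp_psub_in_pball_iff[OF p _ a] by simp_all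
qed

lemma AE_comp_if_distr_scale:
  assumes T: "T \<in> M \<rightarrow>\<^sub>M M" and distr: "distr M M T = scale_measure r M" and ae: "AE y in M. P y"
  shows "AE x in M. P (T x)"
proof -
  from ae obtain N where N: "{x \<in> space M. \<not> P x} \<subseteq> N" "emeasure M N = 0" "N \<in> sets M"
    by (rule AE_E)
  have "AE y in scale_measure r M. P y"
    by (rule AE_I[of _ _ N]) (use N in \<open>auto simp: space_scale_measure\<close>)
  then have "AE y in distr M M T. P y"
    by (simp only: distr)
  then show ?thesis
    by (rule AE_distrD[OF T])
qed

lemma nn_integral_comp_if_distr_scale:
  assumes T: "T \<in> M \<rightarrow>\<^sub>M M" and distr: "distr M M T = scale_measure r M" and g: "g \<in> borel_measurable M"
  shows "(\<integral>\<^sup>+x. g (T x) \<partial>M) = r * (\<integral>\<^sup>+x. g x \<partial>M)"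
proof -
  have "(\<integral>\<^sup>+x. g (T x) \<partial>M) = (\<integral>\<^sup>+x. g x \<partial>distr M M T)"
    using g by (intro nn_integral_distr[OF T, symmetric]) simp
  also have "\<dots> = r * (\<integral>\<^sup>+x. g x \<partial>M)"
    unfolding distr by (rule nn_integral_scale_measure[OF g])
  finally show ?thesis .
qed

section \<open>Closed finite-dimensional subspaces of \<open>L\<^sup>2\<close>\<close>

definition sqnorm :: "'a measure \<Rightarrow> ('a \<Rightarrow> complex) \<Rightarrow> ennreal" where
  "sqnorm M u = (\<integral>\<^sup>+x. ennreal ((cmod (u x))\<^sup>2) \<partial>M)"

lemma cmod_add_squared_le: "(cmod (a + b))\<^sup>2 \<le> 2 * (cmod a)\<^sup>2 + 2 * (cmod b)\<^sup>2"
proof -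
  have "(cmod (a + b))\<^sup>2 \<le> (cmod a + cmod b)\<^sup>2"
    by (intro power_mono norm_triangle_ineq) simp
  moreover have "2 * (cmod a)\<^sup>2 + 2 * (cmod b)\<^sup>2 - (cmod a + cmod b)\<^sup>2 = (cmod a - cmod b)\<^sup>2"
    by (simp add: power2_eq_square algebra_simps)
  moreover have "(cmod a - cmod b)\<^sup>2 \<ge> 0" by simp
  ultimately show ?thesis by linarith
qed

lemma sqnorm_add_le:
  assumes "u \<in> borel_measurable M" "v \<in> borel_measurable M"
  shows "sqnorm M (\<lambda>x. u x + v x) \<le> 2 * sqnorm M u + 2 * sqnorm M v"
proof -
  have "sqnorm M (\<lambda>x. u x + v x) \<le> (\<integral>\<^sup>+x. 2 * ennreal ((cmod (u x))\<^sup>2) + 2 * ennreal ((cmod (v x))\<^sup>2) \<partial>M)"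
    unfolding sqnorm_def
  proof (rule nn_integral_mono)
    fix x
    have "ennreal ((cmod (u x + v x))\<^sup>2) \<le> ennreal (2 * (cmod (u x))\<^sup>2 + 2 * (cmod (v x))\<^sup>2)"
      by (rule ennreal_leI[OF cmod_add_squared_le])
    then show "ennreal ((cmod (u x + v x))\<^sup>2) \<le> 2 * ennreal ((cmod (u x))\<^sup>2) + 2 * ennreal ((cmod (v x))\<^sup>2)"
      by (simp add: ennreal_plus ennreal_mult)
  qed
  also have "\<dots> = 2 * sqnorm M u + 2 * sqnorm M v"
    unfolding sqnorm_def using assms by (simp add: nn_integral_add nn_integral_cmult)
  finally show ?thesis .
qed

lemma sqnorm_add_le_ennreal:
  assumes "u \<in> borel_measurable M" "v \<in> borel_measurable M"
    and "sqnorm M u \<le> ennreal a" "sqnorm M v \<le> ennreal b" "0 \<le> a" "0 \<le> b"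
  shows "sqnorm M (\<lambda>x. u x + v x) \<le> ennreal (2 * a + 2 * b)"
proof -
  have "sqnorm M (\<lambda>x. u x + v x) \<le> 2 * sqnorm M u + 2 * sqnorm M v"
    by (rule sqnorm_add_le[OF assms(1,2)])
  also have "\<dots> \<le> 2 * ennreal a + 2 * ennreal b"
    using assms(3,4) by (intro add_mono mult_left_mono) auto
  also have "\<dots> = ennreal (2 * a + 2 * b)"
    using assms(5,6) by (simp add: ennreal_plus ennreal_mult)
  finally show ?thesis .
qed

lemma sqnorm_cmult:
  "u \<in> borel_measurable M \<Longrightarrow> sqnorm M (\<lambda>x. c * u x) = ennreal ((cmod c)\<^sup>2) * sqnorm M u"
  unfolding sqnorm_def
  by (simp add: norm_mult power_mult_distrib ennreal_mult nn_integral_cmult)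

lemma sqnorm_cong_AE: "AE x in M. u x = v x \<Longrightarrow> sqnorm M u = sqnorm M v"
  unfolding sqnorm_def by (rule nn_integral_cong_AE) (auto elim: eventually_mono)

lemma sqnorm_minus_commute: "sqnorm M (\<lambda>x. u x - v x) = sqnorm M (\<lambda>x. v x - u x)"
  unfolding sqnorm_def by (simp add: norm_minus_commute)

lemma sqnorm_eq_0_AE:
  assumes "u \<in> borel_measurable M" "sqnorm M u = 0"
  shows "AE x in M. u x = 0"
proof -
  have "AE x in M. ennreal ((cmod (u x))\<^sup>2) = 0"
    using assms nn_integral_0_iff_AE[of "\<lambda>x. ennreal ((cmod (u x))\<^sup>2)" M] unfolding sqnorm_def by simp
  then show ?thesis by (auto elim: eventually_mono)
qed

definition approx_span :: "'a measure \<Rightarrow> ('a \<Rightarrow> complex) \<Rightarrow> (nat \<Rightarrow> 'a \<Rightarrow> complex) \<Rightarrow> nat \<Rightarrow> bool" where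
  "approx_span M f H n \<longleftrightarrow> (\<forall>\<epsilon>>0. \<exists>c. sqnorm M (\<lambda>x. f x - (\<Sum>k<n. c k * H k x)) < ennreal \<epsilon>)"

lemma approx_span_0:
  assumes "f \<in> borel_measurable M" "approx_span M f H 0"
  shows "AE x in M. f x = 0"
proof -
  have "sqnorm M f \<le> 0"
  proof (rule ennreal_le_epsilon)
    fix e :: real assume "0 < e"
    then show "sqnorm M f \<le> 0 + ennreal e"
      using assms(2) unfolding approx_span_def by (auto intro: less_imp_le)
  qed
  then have "sqnorm M f = 0" by simp
  then show ?thesis
    using sqnorm_eq_0_AE[OF assms(1)] by simp
qed

lemma approx_span_Suc_if_AE_span:
  assumes H: "AE x in M. H n x = (\<Sum>k<n. d k * H k x)" and f: "approx_span M f H (Suc n)"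
  shows "approx_span M f H n"
  unfolding approx_span_def
proof (intro allI impI)
  fix \<epsilon> :: real assume "\<epsilon> > 0"
  then obtain c where c: "sqnorm M (\<lambda>x. f x - (\<Sum>k<Suc n. c k * H k x)) < ennreal \<epsilon>"
    using f unfolding approx_span_def by blast
  have "AE x in M. f x - (\<Sum>k<Suc n. c k * H k x) = f x - (\<Sum>k<n. (c k + c n * d k) * H k x)"
    using H by eventually_elim (simp add: algebra_simps sum.distrib sum_distrib_left)
  then have "sqnorm M (\<lambda>x. f x - (\<Sum>k<n. (c k + c n * d k) * H k x)) < ennreal \<epsilon>"
    using c sqnorm_cong_AE by fastforce
  then show "\<exists>c. sqnorm M (\<lambda>x. f x - (\<Sum>k<n. c k * H k x)) < ennreal \<epsilon>"
    by (rule exI[of _ "\<lambda>k. c k + c n * d k"])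
qed

lemma approx_span_coeff_bound:
  assumes Hm: "\<And>k. H k \<in> borel_measurable M" and fm: "f \<in> borel_measurable M"
    and F: "sqnorm M f = ennreal F" "F \<ge> 0"
    and e0: "\<epsilon>\<^sub>0 > 0" and away: "\<And>d. ennreal \<epsilon>\<^sub>0 \<le> sqnorm M (\<lambda>x. H n x - (\<Sum>k<n. d k * H k x))"
    and close: "sqnorm M (\<lambda>x. f x - (\<Sum>k<Suc n. c k * H k x)) \<le> 1"
  shows "cmod (c n) \<le> sqrt ((2 * F + 2) / \<epsilon>\<^sub>0)"
proof (cases "c n = 0")
  case True
  then show ?thesis using F e0 by simp
next
  case False
  define g where "g x = (\<Sum>k<Suc n. c k * H k x)" for x
  have gm: "g \<in> borel_measurable M"
    unfolding g_def using Hm by measurable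
  have "sqnorm M (\<lambda>x. g x - f x) \<le> ennreal 1"
    using close sqnorm_minus_commute[of M g f] unfolding g_def by simp
  then have "sqnorm M (\<lambda>x. f x + (g x - f x)) \<le> ennreal (2 * F + 2 * 1)"
    using fm gm F by (intro sqnorm_add_le_ennreal) auto
  then have g_le: "sqnorm M g \<le> ennreal (2 * F + 2)"
    by simp
  define d where "d k = - c k / c n" for k
  have "g = (\<lambda>x. c n * (H n x - (\<Sum>k<n. d k * H k x)))"
    unfolding g_def d_def using False by (auto simp: algebra_simps sum_distrib_left sum_negf)
  then have "sqnorm M g = ennreal ((cmod (c n))\<^sup>2) * sqnorm M (\<lambda>x. H n x - (\<Sum>k<n. d k * H k x))"
    using Hm by (simp add: sqnorm_cmult)
  also have "\<dots> \<ge> ennreal ((cmod (c n))\<^sup>2) * ennreal \<epsilon>\<^sub>0"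
    using away by (intro mult_left_mono) auto
  finally have "ennreal ((cmod (c n))\<^sup>2 * \<epsilon>\<^sub>0) \<le> ennreal (2 * F + 2)"
    using g_le e0 by (simp add: ennreal_mult)
  then have "(cmod (c n))\<^sup>2 * \<epsilon>\<^sub>0 \<le> 2 * F + 2"
    using F by (subst (asm) ennreal_le_iff) auto
  then have "(cmod (c n))\<^sup>2 \<le> (2 * F + 2) / \<epsilon>\<^sub>0"
    using e0 by (simp add: field_simps)
  then show ?thesis by (rule real_le_rsqrt)
qed

lemma approx_span_limit_coeff:
  assumes Hm: "\<And>k. H k \<in> borel_measurable M" and fm: "f \<in> borel_measurable M"
    and Hn: "sqnorm M (H n) = ennreal R" "R \<ge> 0"
    and close: "\<And>j. sqnorm M (\<lambda>x. f x - (\<Sum>k<Suc n. c j k * H k x)) \<le> ennreal (1 / (real j + 1))"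
    and lim: "(\<lambda>j. c j n) \<longlonglongrightarrow> \<gamma>"
  shows "approx_span M (\<lambda>x. f x - \<gamma> * H n x) H n"
  unfolding approx_span_def
proof (intro allI impI)
  fix \<epsilon> :: real assume \<epsilon>: "\<epsilon> > 0"
  define \<delta> where "\<delta> = sqrt (\<epsilon> / (8 * (R + 1)))"
  have \<delta>: "\<delta> > 0" unfolding \<delta>_def using \<epsilon> Hn by simp
  obtain J1 where J1: "\<And>j. j \<ge> J1 \<Longrightarrow> cmod (c j n - \<gamma>) < \<delta>"
    using lim \<delta> unfolding LIMSEQ_iff by blast
  obtain J2 where J2: "inverse (real (Suc J2)) < \<epsilon> / 4"
    using \<epsilon> reals_Archimedean[of "\<epsilon> / 4"] by auto
  define J where "J = max J1 J2"
  have "J2 \<le> J" unfolding J_def by simp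
  then have "1 / (real J + 1) \<le> inverse (real (Suc J2))"
    by (simp add: field_simps)
  then have "ennreal (1 / (real J + 1)) \<le> ennreal (\<epsilon> / 4)"
    using J2 by (intro ennreal_leI) linarith
  then have D1: "sqnorm M (\<lambda>x. f x - (\<Sum>k<Suc n. c J k * H k x)) \<le> ennreal (\<epsilon> / 4)"
    by (rule order_trans[OF close])
  have "(cmod (c J n - \<gamma>))\<^sup>2 * R \<le> \<delta>\<^sup>2 * R"
    using J1[of J] Hn unfolding J_def by (intro mult_right_mono power_mono) auto
  also have "\<dots> = \<epsilon> / 8 * (R / (R + 1))"
    unfolding \<delta>_def using \<epsilon> Hn by simp
  also have "\<dots> \<le> \<epsilon> / 8 * 1"
    using \<epsilon> Hn by (intro mult_left_mono) auto
  finally have D2: "sqnorm M (\<lambda>x. (c J n - \<gamma>) * H n x) \<le> ennreal (\<epsilon> / 8)"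
    using sqnorm_cmult[OF Hm, of "c J n - \<gamma>" n] Hn by (simp add: ennreal_mult[symmetric] ennreal_leI)
  have "sqnorm M (\<lambda>x. (f x - (\<Sum>k<Suc n. c J k * H k x)) + (c J n - \<gamma>) * H n x)
      \<le> ennreal (2 * (\<epsilon> / 4) + 2 * (\<epsilon> / 8))"
    using fm Hm D1 D2 \<epsilon> by (intro sqnorm_add_le_ennreal) auto
  also have "\<dots> < ennreal \<epsilon>"
    using \<epsilon> by (intro ennreal_lessI) auto
  also have "(\<lambda>x. (f x - (\<Sum>k<Suc n. c J k * H k x)) + (c J n - \<gamma>) * H n x)
      = (\<lambda>x. f x - \<gamma> * H n x - (\<Sum>k<n. c J k * H k x))"
    by (auto simp: algebra_simps)
  finally show "\<exists>c. sqnorm M (\<lambda>x. f x - \<gamma> * H n x - (\<Sum>k<n. c k * H k x)) < ennreal \<epsilon>"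
    by (rule exI[of _ "c J"])
qed

lemma sqnorm_diff_cmult_less_top:
  assumes "f \<in> borel_measurable M" "g \<in> borel_measurable M" "sqnorm M f < \<infinity>" "sqnorm M g < \<infinity>"
  shows "sqnorm M (\<lambda>x. f x - c * g x) < \<infinity>"
proof -
  have "sqnorm M (\<lambda>x. f x + (- c) * g x) \<le> 2 * sqnorm M f + 2 * (ennreal ((cmod (- c))\<^sup>2) * sqnorm M g)"
    using sqnorm_add_le[of f M "\<lambda>x. (- c) * g x"] sqnorm_cmult[of g M "- c"] assms(1,2) by simp
  also have "\<dots> < \<infinity>"
    using assms(3,4) by (simp add: ennreal_mult_less_top)
  finally show ?thesis by simp
qed

lemma approx_span_Suc_reduce:
  assumes Hm: "\<And>k. H k \<in> borel_measurable M" and Hn: "sqnorm M (H n) < \<infinity>"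
    and fm: "f \<in> borel_measurable M" and ff: "sqnorm M f < \<infinity>"
    and away: "\<not> approx_span M (H n) H n" and f: "approx_span M f H (Suc n)"
  shows "\<exists>\<gamma>. approx_span M (\<lambda>x. f x - \<gamma> * H n x) H n"
proof -
  obtain \<epsilon>\<^sub>0 where e0: "\<epsilon>\<^sub>0 > 0" and e0b: "\<And>d. ennreal \<epsilon>\<^sub>0 \<le> sqnorm M (\<lambda>x. H n x - (\<Sum>k<n. d k * H k x))"
    using away unfolding approx_span_def by (auto simp: not_less)
  define c where "c j = (SOME c. sqnorm M (\<lambda>x. f x - (\<Sum>k<Suc n. c k * H k x)) < ennreal (1 / (real j + 1)))" for j
  have c: "sqnorm M (\<lambda>x. f x - (\<Sum>k<Suc n. c j k * H k x)) < ennreal (1 / (real j + 1))" for j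
  proof -
    have "\<exists>c. sqnorm M (\<lambda>x. f x - (\<Sum>k<Suc n. c k * H k x)) < ennreal (1 / (real j + 1))"
      using f unfolding approx_span_def by simp
    then show ?thesis
      unfolding c_def by (rule someI_ex)
  qed
  have c_le_1: "sqnorm M (\<lambda>x. f x - (\<Sum>k<Suc n. c j k * H k x)) \<le> 1" for j
    using c[of j] by (rule order.trans[OF less_imp_le]) (simp add: ennreal_le_1)
  define F where "F = enn2real (sqnorm M f)"
  have F: "sqnorm M f = ennreal F" "F \<ge> 0"
    using ff unfolding F_def by auto
  have "bounded (range (\<lambda>j. c j n))"
    using approx_span_coeff_bound[OF Hm fm F e0 e0b c_le_1] by (intro boundedI) auto
  then obtain \<gamma> r where r: "strict_mono r" and lim: "((\<lambda>j. c j n) \<circ> r) \<longlonglongrightarrow> \<gamma>"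
    using bounded_imp_convergent_subsequence by blast
  define R where "R = enn2real (sqnorm M (H n))"
  have R: "sqnorm M (H n) = ennreal R" "R \<ge> 0"
    using Hn unfolding R_def by auto
  have "sqnorm M (\<lambda>x. f x - (\<Sum>k<Suc n. (c \<circ> r) j k * H k x)) \<le> ennreal (1 / (real j + 1))" for j
  proof -
    have "real j \<le> real (r j)" using seq_suble[OF r, of j] by simp
    then have "ennreal (1 / (real (r j) + 1)) \<le> ennreal (1 / (real j + 1))"
      by (intro ennreal_leI) (simp add: frac_le)
    then show ?thesis
      using c[of "r j"] unfolding o_def by (meson less_imp_le order.trans)
  qed
  moreover have "(\<lambda>j. (c \<circ> r) j n) \<longlonglongrightarrow> \<gamma>"
    using lim by (simp add: o_def)
  ultimately have "approx_span M (\<lambda>x. f x - \<gamma> * H n x) H n"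
    by (rule approx_span_limit_coeff[where H = H and n = n, OF Hm fm R])
  then show ?thesis ..
qed

text \<open>Induction on \<open>n\<close>: either \<open>H n\<close> is itself approximable by its predecessors and can be dropped,
  or the coefficients of \<open>H n\<close> in good approximations of \<open>f\<close> stay bounded and converge along a
  subsequence to some \<open>\<gamma>\<close>, and the induction hypothesis applies to \<open>f - \<gamma> H n\<close>.\<close>

lemma approx_span_imp_AE_span:
  assumes Hm: "\<And>k. H k \<in> borel_measurable M" and Hf: "\<And>k. sqnorm M (H k) < \<infinity>"
  shows "f \<in> borel_measurable M \<Longrightarrow> sqnorm M f < \<infinity> \<Longrightarrow> approx_span M f H n \<Longrightarrow>
    \<exists>h. AE x in M. f x = (\<Sum>k<n. h k * H k x)"
proof (induction n arbitrary: f)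
  case 0
  then show ?case using approx_span_0 by simp
next
  case (Suc n)
  show ?case
  proof (cases "approx_span M (H n) H n")
    case True
    then obtain d where "AE x in M. H n x = (\<Sum>k<n. d k * H k x)"
      using Suc.IH[OF Hm Hf True] by blast
    then obtain h where "AE x in M. f x = (\<Sum>k<n. h k * H k x)"
      using Suc.IH[OF Suc.prems(1,2) approx_span_Suc_if_AE_span[OF _ Suc.prems(3)]] by blast
    then have "AE x in M. f x = (\<Sum>k<Suc n. (h(n := 0)) k * H k x)"
      by eventually_elim simp
    then show ?thesis by blast
  next
    case False
    then obtain \<gamma> where "approx_span M (\<lambda>x. f x - \<gamma> * H n x) H n"
      using approx_span_Suc_reduce[OF Hm Hf Suc.prems(1,2) False Suc.prems(3)] by blast
    moreover have "(\<lambda>x. f x - \<gamma> * H n x) \<in> borel_measurable M"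
      using Suc.prems(1) Hm by measurable
    moreover have "sqnorm M (\<lambda>x. f x - \<gamma> * H n x) < \<infinity>"
      using Suc.prems(1,2) by (intro sqnorm_diff_cmult_less_top Hm Hf)
    ultimately obtain h where "AE x in M. f x - \<gamma> * H n x = (\<Sum>k<n. h k * H k x)"
      using Suc.IH[of "\<lambda>x. f x - \<gamma> * H n x"] by blast
    then have "AE x in M. f x = (\<Sum>k<Suc n. (h(n := \<gamma>)) k * H k x)"
      by eventually_elim (simp add: algebra_simps)
    then show ?thesis by blast
  qed
qed

lemma L2_comp_if_distr_scale:
  assumes T: "T \<in> M \<rightarrow>\<^sub>M M" and distr: "distr M M T = scale_measure r M" and r: "r < \<infinity>"
    and g: "g \<in> borel_measurable M" "integrable M (\<lambda>x. (cmod (g x))\<^sup>2)"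
  shows "(\<lambda>x. g (T x)) \<in> borel_measurable M" and "sqnorm M (\<lambda>x. g (T x)) < \<infinity>"
proof -
  show "(\<lambda>x. g (T x)) \<in> borel_measurable M"
    using measurable_compose[OF T g(1)] .
  have "sqnorm M (\<lambda>x. g (T x)) = r * (\<integral>\<^sup>+x. ennreal ((cmod (g x))\<^sup>2) \<partial>M)"
    unfolding sqnorm_def using g(1) by (intro nn_integral_comp_if_distr_scale[OF T distr]) measurable
  moreover have "(\<integral>\<^sup>+x. ennreal ((cmod (g x))\<^sup>2) \<partial>M) < \<infinity>"
    using integrableD(2)[OF g(2)] by (simp add: top.not_eq_extremum)
  ultimately show "sqnorm M (\<lambda>x. g (T x)) < \<infinity>"
    using r by (simp add: ennreal_mult_less_top)
qed

section \<open>Supports of the dilates\<close>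

text \<open>\<open>x/p - a \<in> B\<^sub>N(0)\<close> means \<open>x \<in> B\<^sub>N\<^sub>-\<^sub>1(p a)\<close>, and this ball lies inside \<open>B\<^sub>N(0)\<close> or misses it
  according to whether \<open>p a \<in> B\<^sub>N(0)\<close>.\<close>

lemma dilate_in_pball_imp_iff:
  assumes p: "prime p" and a: "a \<in> Qp p" and x: "x \<in> Qp p"
    and dil: "psub p (pdivp p x) a \<in> pball p (int N) pzero"
  shows "x \<in> pball p (int N) pzero \<longleftrightarrow> qcong (of_nat p * a 0) 0 (ball_modulus p (int N))"
proof -
  have p0: "p > 0" using p prime_gt_0_nat by blast
  define c where "c = pmulp_add p a pzero"
  have cQ: "c \<in> Qp p" unfolding c_def by (rule pmulp_add_Qp[OF p0 a pzero_Qp[OF p0]])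
  have xc: "x \<in> pball p (int N - 1) c"
    using dil pdivp_psub_in_pball_iff[OF p x a pzero_Qp[OF p0]] unfolding c_def by simp
  have "x \<in> pball p (int N) pzero \<longleftrightarrow> c \<in> pball p (int N) pzero"
    using pball_nested[OF p cQ pzero_Qp[OF p0], of "int N - 1" "int N" x] xc
      pball_subset_iff_centre[OF p cQ pzero_Qp[OF p0], of "int N - 1" "int N"] by auto
  also have "\<dots> \<longleftrightarrow> qcong (c 0) 0 (ball_modulus p (int N))"
    using pball_iff_qcong[OF p pzero_Qp[OF p0] cQ, of "int N" 0] by (simp add: pzero_def)
  also have "\<dots> \<longleftrightarrow> qcong (of_nat p * a 0) 0 (ball_modulus p (int N))"
  proof -
    have "qcong (rmod (of_nat p * a 0) (of_nat (p ^ 0))) (of_nat p * a 0) (ball_modulus p (int N))"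
      by (rule qcong_rmod_ball_modulus[OF p0]) simp
    then show ?thesis
      unfolding c_def pmulp_add_def pzero_def by (simp add: qcong_subst_left)
  qed
  finally show ?thesis .
qed

definition frac_point :: "nat \<Rightarrow> nat \<Rightarrow> nat \<Rightarrow> padic" where
  "frac_point p M k = qemb p (of_nat k / of_nat (p ^ M))"

lemma frac_point_0: "p > 0 \<Longrightarrow> k < p ^ M \<Longrightarrow> frac_point p M k 0 = of_nat k / of_nat (p ^ M)"
  unfolding frac_point_def qemb_def by (simp add: rmod_eq_self)

lemma frac_point_Qp:
  assumes "p > 0"
  shows "frac_point p M k \<in> Qp p"
proof -
  have "pint p (of_nat k / of_nat (p ^ M))"
    unfolding pint_def by (rule exI[of _ "int k"], rule exI[of _ M]) simp
  then show ?thesis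
    unfolding frac_point_def by (rule qemb_Qp[OF assms])
qed

lemma frac_point_inj:
  assumes "p > 0" "k < p ^ M" "k' < p ^ M" "frac_point p M k = frac_point p M k'"
  shows "k = k'"
  using arg_cong[OF assms(4), of "\<lambda>x. x 0"] frac_point_0[OF assms(1,2)] frac_point_0[OF assms(1,3)]
    assms(1) by simp

lemma frac_point_qcong:
  assumes "p > 0" "k < p ^ (N + 1)"
  shows "qcong (of_nat p * frac_point p (N + 1) k 0) 0 (ball_modulus p (int N))"
proof -
  have "of_nat p * frac_point p (N + 1) k 0 = of_int (int k) * ball_modulus p (int N)"
    using frac_point_0[OF assms] assms(1)
    unfolding ball_modulus_def by (simp add: power_int_minus_divide)
  then show ?thesis
    unfolding qcong_def by (intro exI[of _ "int k"]) simp
qed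

lemma Ip_eq_frac_point:
  assumes p0: "p > 0" and a: "a \<in> Ip p" and cong: "qcong (of_nat p * a 0) 0 (ball_modulus p (int N))"
  shows "\<exists>k<p ^ (N + 1). a = frac_point p (N + 1) k"
proof -
  have modulus: "ball_modulus p (int N) = 1 / of_nat (p ^ N)"
    unfolding ball_modulus_def by (simp add: power_int_minus_divide)
  obtain t where "of_nat p * a 0 = of_int t * ball_modulus p (int N)"
    using cong unfolding qcong_def by auto
  then have a0: "a 0 = of_int t / of_nat (p ^ (N + 1))"
    using p0 unfolding modulus by (simp add: field_simps)
  have aQ: "a \<in> Qp p" using a unfolding Ip_def by simp
  have pos: "(of_nat (p ^ (N + 1)) :: rat) > 0" using p0 by simp
  have t_eq: "of_int t = a 0 * of_nat (p ^ (N + 1))"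
    unfolding a0 using pos p0 by (simp add: field_simps del: of_nat_power)
  have "a 0 * of_nat (p ^ (N + 1)) < 1 * of_nat (p ^ (N + 1))"
    using QpD(3)[OF aQ, of 0] pos by (intro mult_strict_right_mono) simp_all
  then have "(0::rat) \<le> of_int t" "(of_int t :: rat) < of_int (int (p ^ (N + 1)))"
    unfolding t_eq using QpD(2)[OF aQ, of 0] pos by simp_all
  then have t: "0 \<le> t" "nat t < p ^ (N + 1)"
    by (simp_all only: of_int_0_le_iff of_int_less_iff)
  have "a = qemb p (a 0)"
    using a unfolding Ip_def pfrac_def by simp
  also have "\<dots> = frac_point p (N + 1) (nat t)"
    unfolding frac_point_def a0 using t by simp
  finally show ?thesis
    using t by blast
qed

lemma frac_point_dilate_support:
  assumes p: "prime p" and k: "k < p ^ (N + 1)" and x: "x \<in> Qp p"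
    and dil: "psub p (pdivp p x) (frac_point p (N + 1) k) \<in> pball p (int N) pzero"
  shows "x \<in> pball p (int N) pzero"
  using dilate_in_pball_imp_iff[OF p frac_point_Qp x dil] frac_point_qcong[OF _ k] prime_gt_0_nat[OF p]
  by simp

lemma sum_Ip_dilates_eq_sum_frac_points:
  fixes c :: "padic \<Rightarrow> complex"
  assumes p: "prime p" and x: "x \<in> pball p (int N) pzero" and A: "finite A" "A \<subseteq> Ip p"
    and supp: "\<And>a. a \<in> A \<Longrightarrow> \<phi> (psub p (pdivp p x) a) \<noteq> 0 \<Longrightarrow> psub p (pdivp p x) a \<in> pball p (int N) pzero"
  shows "(\<Sum>a\<in>A. c a * \<phi> (psub p (pdivp p x) a))
    = (\<Sum>k<p ^ (N + 1). (if frac_point p (N + 1) k \<in> A then c (frac_point p (N + 1) k) else 0)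
        * \<phi> (psub p (pdivp p x) (frac_point p (N + 1) k)))"
proof -
  have p0: "p > 0" using p prime_gt_0_nat by blast
  have xQ: "x \<in> Qp p" using x pball_subset_Qp by blast
  define e where "e = frac_point p (N + 1)"
  define g where "g a = c a * \<phi> (psub p (pdivp p x) a)" for a
  define K where "K = {k. k < p ^ (N + 1) \<and> e k \<in> A}"
  have "g a = 0" if aA: "a \<in> A" and aK: "a \<notin> e ` K" for a
  proof (rule ccontr)
    assume "g a \<noteq> 0"
    then have "psub p (pdivp p x) a \<in> pball p (int N) pzero"
      using supp[OF aA] unfolding g_def by auto
    then have "qcong (of_nat p * a 0) 0 (ball_modulus p (int N))"
      using dilate_in_pball_imp_iff[OF p _ xQ] x aA A(2) unfolding Ip_def by auto
    then obtain k where "k < p ^ (N + 1)" "a = e k"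
      using Ip_eq_frac_point[OF p0] aA A(2) unfolding e_def by blast
    then show False
      using aA aK unfolding K_def by blast
  qed
  then have "(\<Sum>a\<in>A. g a) = (\<Sum>a\<in>e ` K. g a)"
    unfolding K_def by (intro sum.mono_neutral_right A(1)) auto
  also have "\<dots> = (\<Sum>k\<in>K. g (e k))"
  proof -
    have "inj_on e K"
      unfolding inj_on_def K_def e_def using frac_point_inj[OF p0] by blast
    then show ?thesis by (simp add: sum.reindex)
  qed
  also have "\<dots> = (\<Sum>k<p ^ (N + 1). if e k \<in> A then g (e k) else 0)"
    unfolding K_def by (simp add: sum.If_cases lessThan_def Collect_conj_eq Int_commute)
  also have "\<dots> = (\<Sum>k<p ^ (N + 1). (if e k \<in> A then c (e k) else 0) * \<phi> (psub p (pdivp p x) (e k)))"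
    unfolding g_def by (intro sum.cong) auto
  finally show ?thesis
    unfolding g_def e_def .
qed

lemma AE_dilates_support:
  assumes p: "prime p" and normalised: "haar_normalised p"
    and \<phi>: "AE x in haar p. x \<notin> pball p \<gamma> pzero \<longrightarrow> \<phi> x = 0"
    and D: "countable D" "D \<subseteq> Qp p"
  shows "AE x in haar p. \<forall>a\<in>D. psub p (pdivp p x) a \<notin> pball p \<gamma> pzero \<longrightarrow> \<phi> (psub p (pdivp p x) a) = 0"
proof (rule AE_ball_countable'[OF _ D(1)])
  fix a assume "a \<in> D"
  then have a: "a \<in> Qp p" by (rule subsetD[OF D(2)])
  show "AE x in haar p. psub p (pdivp p x) a \<notin> pball p \<gamma> pzero \<longrightarrow> \<phi> (psub p (pdivp p x) a) = 0"
    by (rule AE_comp_if_distr_scale[OF haar_dilation[OF p normalised a] \<phi>])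
qed

lemma frac_point_approx_error_le:
  fixes c :: "padic \<Rightarrow> complex"
  assumes p: "prime p" and x: "x \<in> Qp p" and A: "finite A" "A \<subseteq> Ip p" and b: "b \<in> pball p (int N) pzero"
    and \<phi>: "\<forall>a \<in> A \<union> range (frac_point p (N + 1)).
      psub p (pdivp p x) a \<notin> pball p (int N) pzero \<longrightarrow> \<phi> (psub p (pdivp p x) a) = 0"
    and \<psi>: "psub p x b \<notin> pball p (int N) pzero \<longrightarrow> \<psi> (psub p x b) = 0"
  shows "cmod (\<psi> (psub p x b) - (\<Sum>k<p ^ (N + 1).
      (if frac_point p (N + 1) k \<in> A then c (frac_point p (N + 1) k) else 0)
        * \<phi> (psub p (pdivp p x) (frac_point p (N + 1) k))))
    \<le> cmod (\<psi> (psub p x b) - (\<Sum>a\<in>A. c a * \<phi> (psub p (pdivp p x) a)))"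
proof (cases "x \<in> pball p (int N) pzero")
  case True
  have "psub p (pdivp p x) a \<in> pball p (int N) pzero"
    if "a \<in> A" "\<phi> (psub p (pdivp p x) a) \<noteq> 0" for a
    using \<phi> that by auto
  then show ?thesis
    using sum_Ip_dilates_eq_sum_frac_points[where c = c, OF p True A] by simp
next
  case False
  then have "\<psi> (psub p x b) = 0"
    using \<psi> psub_in_pball_pzero_iff[OF p x b] by simp
  moreover have "\<phi> (psub p (pdivp p x) (frac_point p (N + 1) k)) = 0" if "k < p ^ (N + 1)" for k
    using \<phi> frac_point_dilate_support[OF p that x] False by blast
  ultimately show ?thesis by simp
qed

lemma approx_span_frac_point_dilates:
  assumes p: "prime p" and normalised: "haar_normalised p"
    and \<phi>: "AE x in haar p. x \<notin> pball p (int N) pzero \<longrightarrow> \<phi> x = 0"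
    and \<psi>: "AE x in haar p. x \<notin> pball p (int N) pzero \<longrightarrow> \<psi> x = 0"
    and b: "b \<in> pball p (int N) pzero"
    and approx: "\<forall>\<epsilon>>0. \<exists>A c. finite A \<and> A \<subseteq> Ip p \<and>
           (\<integral>\<^sup>+ x. ennreal ((cmod (\<psi> (psub p x b)
               - (\<Sum>a\<in>A. c a * \<phi> (psub p (pdivp p x) a))))\<^sup>2) \<partial>haar p) < ennreal \<epsilon>"
  shows "approx_span (haar p) (\<lambda>x. \<psi> (psub p x b))
    (\<lambda>k x. \<phi> (psub p (pdivp p x) (frac_point p (N + 1) k))) (p ^ (N + 1))"
  unfolding approx_span_def sqnorm_def
proof (intro allI impI)
  fix \<epsilon> :: real assume "\<epsilon> > 0"
  then obtain A c where A: "finite A" "A \<subseteq> Ip p" and err: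
    "(\<integral>\<^sup>+ x. ennreal ((cmod (\<psi> (psub p x b) - (\<Sum>a\<in>A. c a * \<phi> (psub p (pdivp p x) a))))\<^sup>2) \<partial>haar p) < ennreal \<epsilon>"
    using approx by blast
  have p0: "p > 0" using p prime_gt_0_nat by blast
  have bQ: "b \<in> Qp p" using b pball_subset_Qp by blast
  define B where "B = pball p (int N) pzero"
  define S where "S a x = psub p (pdivp p x) a" for a x
  define e where "e = frac_point p (N + 1)"
  define c' where "c' k = (if e k \<in> A then c (e k) else 0)" for k
  have "AE x in haar p. \<forall>a \<in> A \<union> range e. S a x \<notin> B \<longrightarrow> \<phi> (S a x) = 0"
    unfolding S_def B_def using A frac_point_Qp[OF p0] unfolding Ip_def e_def
    by (intro AE_dilates_support[OF p normalised \<phi>]) (auto simp: countable_finite)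
  moreover have "AE x in haar p. psub p x b \<notin> B \<longrightarrow> \<psi> (psub p x b) = 0"
    unfolding B_def by (rule AE_comp_if_distr_scale[OF haar_translation[OF p normalised bQ] \<psi>])
  ultimately have "AE x in haar p.
      ennreal ((cmod (\<psi> (psub p x b) - (\<Sum>k<p ^ (N + 1). c' k * \<phi> (S (e k) x))))\<^sup>2)
      \<le> ennreal ((cmod (\<psi> (psub p x b) - (\<Sum>a\<in>A. c a * \<phi> (S a x))))\<^sup>2)"
    using AE_space
  proof eventually_elim
    case (elim x)
    have "x \<in> Qp p" using elim(3) space_haar by simp
    from frac_point_approx_error_le[where c = c, OF p this A b] elim(1,2)
    show ?case
      unfolding B_def S_def c'_def e_def by (intro ennreal_leI power_mono) simp_all
  qed
  then have "(\<integral>\<^sup>+x. ennreal ((cmod (\<psi> (psub p x b) - (\<Sum>k<p ^ (N + 1). c' k * \<phi> (S (e k) x))))\<^sup>2) \<partial>haar p)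
      \<le> (\<integral>\<^sup>+x. ennreal ((cmod (\<psi> (psub p x b) - (\<Sum>a\<in>A. c a * \<phi> (S a x))))\<^sup>2) \<partial>haar p)"
    by (rule nn_integral_mono_AE)
  also have "\<dots> < ennreal \<epsilon>"
    using err unfolding S_def .
  finally show "\<exists>c. (\<integral>\<^sup>+x. ennreal ((cmod (\<psi> (psub p x b)
      - (\<Sum>k<p ^ (N + 1). c k * \<phi> (psub p (pdivp p x) (frac_point p (N + 1) k)))))\<^sup>2) \<partial>haar p) < ennreal \<epsilon>"
    unfolding S_def e_def by (rule exI[of _ c'])
qed

theorem proposition1:
  fixes p N :: nat and \<phi> \<psi> :: "padic \<Rightarrow> complex" and b :: padic
  assumes "prime p"
    and "\<phi> \<in> L2 p" and "\<psi> \<in> L2 p"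
    and "AE x in haar p. x \<notin> pball p (int N) pzero \<longrightarrow> \<phi> x = 0"
    and "AE x in haar p. x \<notin> pball p (int N) pzero \<longrightarrow> \<psi> x = 0"
    and "b \<in> Ip p" and "pnorm p b \<le> real p ^ N"
    and "\<forall>\<epsilon>>0. \<exists>A c. finite A \<and> A \<subseteq> Ip p \<and>
           (\<integral>\<^sup>+ x. ennreal ((cmod (\<psi> (psub p x b)
               - (\<Sum>a\<in>A. c a * \<phi> (psub p (pdivp p x) a))))\<^sup>2) \<partial>haar p) < ennreal \<epsilon>"
  shows "\<exists>h :: nat \<Rightarrow> complex. AE x in haar p.
           \<psi> (psub p x b) = (\<Sum>k<p ^ (N + 1).
              h k * \<phi> (psub p (pdivp p x) (qemb p (of_nat k / of_nat (p ^ (N + 1))))))"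
proof (cases "haar_normalised p")
  case False
  then have "emeasure (haar p) A = 0" for A
    using haar_normalised_or_null[of p] by blast
  then show ?thesis
    by (intro exI[of _ "\<lambda>_. 0"] AE_null_measure)
next
  case normalised: True
  have p: "prime p" and p0: "p > 0" using assms(1) prime_gt_0_nat by auto
  have bQ: "b \<in> Qp p" using assms(6) unfolding Ip_def by simp
  have b: "b \<in> pball p (int N) pzero"
    using pnorm_le_imp_in_pball_pzero[OF p bQ] assms(7) by simp
  define H where "H k x = \<phi> (psub p (pdivp p x) (frac_point p (N + 1) k))" for k x
  note dilation = haar_dilation[OF p normalised frac_point_Qp[OF p0]]
  note translation = haar_translation[OF p normalised bQ]
  have Hm: "H k \<in> borel_measurable (haar p)" and Hf: "sqnorm (haar p) (H k) < \<infinity>" for k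
    unfolding H_def using L2_comp_if_distr_scale[OF dilation] assms(2) unfolding L2_def by auto
  have fm: "(\<lambda>x. \<psi> (psub p x b)) \<in> borel_measurable (haar p)"
    and ff: "sqnorm (haar p) (\<lambda>x. \<psi> (psub p x b)) < \<infinity>"
    using L2_comp_if_distr_scale[OF translation] assms(3) unfolding L2_def by auto
  have "approx_span (haar p) (\<lambda>x. \<psi> (psub p x b)) H (p ^ (N + 1))"
    unfolding H_def by (rule approx_span_frac_point_dilates[OF p normalised assms(4,5) b assms(8)])
  then obtain h where "AE x in haar p. \<psi> (psub p x b) = (\<Sum>k<p ^ (N + 1). h k * H k x)"
    using approx_span_imp_AE_span[where H = H, OF Hm Hf fm ff] by blast
  then show ?thesis
    unfolding H_def frac_point_def by blast
qed

end
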